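(* There is a homomorphism of $\mathbb{S}$--algebras $\iota_1:bH_n(q)\to\mathcal{E}_n(q)$ satisfying $\iota_1(e_i)=e_i$ and $\iota_1(z_i)=e_ig_i$ for all $i\in[n-1]$.
   Context: $\mathbb{S}=\mathbb{C}[q,q^{-1}]$ with $q$ an indeterminate. The tied--boxed Hecke algebra $bH_n(q)$ is the $\mathbb{S}$--algebra presented by generators $e_1,\dots,e_{n-1}$, $z_1,\dots,z_{n-1}$ and relations: $e_i^2=e_i$, $e_ie_j=e_je_i$ (all $i,j$); $z_iz_jz_i=z_jz_iz_j$ if $|i-j|=1$, $z_iz_j=z_jz_i$ if $|i-j|>1$; $e_iz_i=z_i$; $e_iz_j=z_je_i$ (all $i,j$); $z_i^2=e_i+(q-q^{-1})z_i$. The algebra of braids and ties $\mathcal{E}_n(q)$ is the $\mathbb{S}$--algebra presented by generators $e_1,\dots,e_{n-1}$, $g_1,\dots,g_{n-1}$ and relations: $e_i^2=e_i$, $e_ie_j=e_je_i$; $g_ig_jg_i=g_jg_ig_j$ if $|i-j|=1$, $g_ig_j=g_jg_i$ if $|i-j|>1$; $g_ie_i=e_ig_i$; $g_ie_j=e_jg_i$ if $|i-j|>1$; $e_ig_jg_i=g_jg_ie_j$ and $e_ie_jg_j=e_ig_je_i=g_je_ie_j$ if $|i-j|=1$; $g_i^2=1+(q-q^{-1})e_ig_i$. *)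

theory Defs
  imports Complex_Main "HOL-Library.Poly_Mapping"
begin

text \<open>Laurent polynomials over C, realised as the group algebra of the integers:
finitely supported functions int to complex with convolution product.\<close>
type_synonym laurent = "int \<Rightarrow>\<^sub>0 complex"

definition qL :: laurent where "qL = Poly_Mapping.single 1 1"
definition qinvL :: laurent where "qinvL = Poly_Mapping.single (-1) 1"

type_synonym 'g freealg = "'g list \<Rightarrow>\<^sub>0 laurent"

definition fa_mul :: "'g freealg \<Rightarrow> 'g freealg \<Rightarrow> 'g freealg" where
  "fa_mul p r = (\<Sum>u\<in>Poly_Mapping.keys p. \<Sum>v\<in>Poly_Mapping.keys r.
      Poly_Mapping.single (u @ v) (Poly_Mapping.lookup p u * Poly_Mapping.lookup r v))"

definition fa_scal :: "laurent \<Rightarrow> 'g freealg" where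
  "fa_scal c = Poly_Mapping.single [] c"

definition fa_one :: "'g freealg" where "fa_one = fa_scal 1"

definition fa_smult :: "laurent \<Rightarrow> 'g freealg \<Rightarrow> 'g freealg" where
  "fa_smult c p = fa_mul (fa_scal c) p"

definition fa_gen :: "'g \<Rightarrow> 'g freealg" where
  "fa_gen x = Poly_Mapping.single [x] 1"

text \<open>The congruence (two-sided ideal relation) generated by a set of relations;
the presented algebra is the quotient of the free algebra by it.\<close>
inductive fa_cong :: "('g freealg \<times> 'g freealg) set \<Rightarrow> 'g freealg \<Rightarrow> 'g freealg \<Rightarrow> bool"
  for R where
  rel: "(a, b) \<in> R \<Longrightarrow> fa_cong R a b"
| refl: "fa_cong R a a"
| sym: "fa_cong R a b \<Longrightarrow> fa_cong R b a"
| trans: "fa_cong R a b \<Longrightarrow> fa_cong R b c \<Longrightarrow> fa_cong R a c"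
| add: "fa_cong R a b \<Longrightarrow> fa_cong R c d \<Longrightarrow> fa_cong R (a + c) (b + d)"
| mult_left: "fa_cong R a b \<Longrightarrow> fa_cong R (fa_mul c a) (fa_mul c b)"
| mult_right: "fa_cong R a b \<Longrightarrow> fa_cong R (fa_mul a c) (fa_mul b c)"

datatype bgen = bE nat | bZ nat
datatype egen = eE nat | eG nat

abbreviation "fa_mul3 a b c \<equiv> fa_mul a (fa_mul b c)"

text \<open>Generators are indexed by nat; those with index outside [n-1] = {1..<n} are
set to 0 by extra relations, so the quotient is exactly the presented algebra.\<close>

definition bH_rels :: "nat \<Rightarrow> (bgen freealg \<times> bgen freealg) set" where
  "bH_rels n =
     (let e = (\<lambda>i. fa_gen (bE i)); z = (\<lambda>i. fa_gen (bZ i)); I = {1..<n} in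
       {(fa_mul (e i) (e i), e i) | i. i \<in> I}
     \<union> {(fa_mul (e i) (e j), fa_mul (e j) (e i)) | i j. i \<in> I \<and> j \<in> I}
     \<union> {(fa_mul3 (z i) (z j) (z i), fa_mul3 (z j) (z i) (z j)) | i j.
           i \<in> I \<and> j \<in> I \<and> (i = j + 1 \<or> j = i + 1)}
     \<union> {(fa_mul (z i) (z j), fa_mul (z j) (z i)) | i j.
           i \<in> I \<and> j \<in> I \<and> (i > j + 1 \<or> j > i + 1)}
     \<union> {(fa_mul (e i) (z i), z i) | i. i \<in> I}
     \<union> {(fa_mul (e i) (z j), fa_mul (z j) (e i)) | i j. i \<in> I \<and> j \<in> I}
     \<union> {(fa_mul (z i) (z i), e i + fa_smult (qL - qinvL) (z i)) | i. i \<in> I}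
     \<union> {(e i, 0) | i. i \<notin> I} \<union> {(z i, 0) | i. i \<notin> I})"

definition E_rels :: "nat \<Rightarrow> (egen freealg \<times> egen freealg) set" where
  "E_rels n =
     (let e = (\<lambda>i. fa_gen (eE i)); g = (\<lambda>i. fa_gen (eG i)); I = {1..<n} in
       {(fa_mul (e i) (e i), e i) | i. i \<in> I}
     \<union> {(fa_mul (e i) (e j), fa_mul (e j) (e i)) | i j. i \<in> I \<and> j \<in> I}
     \<union> {(fa_mul3 (g i) (g j) (g i), fa_mul3 (g j) (g i) (g j)) | i j.
           i \<in> I \<and> j \<in> I \<and> (i = j + 1 \<or> j = i + 1)}
     \<union> {(fa_mul (g i) (g j), fa_mul (g j) (g i)) | i j.
           i \<in> I \<and> j \<in> I \<and> (i > j + 1 \<or> j > i + 1)}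
     \<union> {(fa_mul (g i) (e i), fa_mul (e i) (g i)) | i. i \<in> I}
     \<union> {(fa_mul (g i) (e j), fa_mul (e j) (g i)) | i j.
           i \<in> I \<and> j \<in> I \<and> (i > j + 1 \<or> j > i + 1)}
     \<union> {(fa_mul3 (e i) (g j) (g i), fa_mul3 (g j) (g i) (e j)) | i j.
           i \<in> I \<and> j \<in> I \<and> (i = j + 1 \<or> j = i + 1)}
     \<union> {(fa_mul3 (e i) (e j) (g j), fa_mul3 (e i) (g j) (e i)) | i j.
           i \<in> I \<and> j \<in> I \<and> (i = j + 1 \<or> j = i + 1)}
     \<union> {(fa_mul3 (e i) (g j) (e i), fa_mul3 (g j) (e i) (e j)) | i j.
           i \<in> I \<and> j \<in> I \<and> (i = j + 1 \<or> j = i + 1)}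
     \<union> {(fa_mul (g i) (g i), fa_one + fa_smult (qL - qinvL) (fa_mul (e i) (g i))) | i. i \<in> I}
     \<union> {(e i, 0) | i. i \<notin> I} \<union> {(g i, 0) | i. i \<notin> I})"

abbreviation bH_eq :: "nat \<Rightarrow> bgen freealg \<Rightarrow> bgen freealg \<Rightarrow> bool" where
  "bH_eq n \<equiv> fa_cong (bH_rels n)"
abbreviation E_eq :: "nat \<Rightarrow> egen freealg \<Rightarrow> egen freealg \<Rightarrow> bool" where
  "E_eq n \<equiv> fa_cong (E_rels n)"

text \<open>A map on representatives that is compatible with the defining congruences and is
additive, S-linear, multiplicative and unital modulo the target congruence; such maps
are exactly S-algebra homomorphisms between the quotient algebras.\<close>
definition pres_alg_hom ::
  "('a freealg \<Rightarrow> 'a freealg \<Rightarrow> bool) \<Rightarrow> ('b freealg \<Rightarrow> 'b freealg \<Rightarrow> bool)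
   \<Rightarrow> ('a freealg \<Rightarrow> 'b freealg) \<Rightarrow> bool" where
  "pres_alg_hom EqA EqB f \<longleftrightarrow>
     (\<forall>x y. EqA x y \<longrightarrow> EqB (f x) (f y)) \<and>
     (\<forall>x y. EqB (f (x + y)) (f x + f y)) \<and>
     (\<forall>c x. EqB (f (fa_smult c x)) (fa_smult c (f x))) \<and>
     (\<forall>x y. EqB (f (fa_mul x y)) (fa_mul (f x) (f y))) \<and>
     EqB (f fa_one) fa_one"

end

theory Submission
  imports Defs
begin

text \<open>The substitution \<open>e\<^sub>i \<mapsto> e\<^sub>i\<close>, \<open>z\<^sub>i \<mapsto> e\<^sub>i g\<^sub>i\<close> of generators by words extends to an
algebra map of free algebras, which descends to the quotients once every defining relation
of \<open>bH\<^sub>n(q)\<close> is mapped into the congruence of \<open>E\<^sub>n(q)\<close>. For \<open>f\<^sub>i = e\<^sub>i g\<^sub>i\<close>: \<open>e\<^sub>i f\<^sub>i = f\<^sub>i\<close> and \<open>f\<^sub>i\<^sup>2 = e\<^sub>i g\<^sub>i\<^sup>2 = e\<^sub>i + (q - q\<^sup>-\<^sup>1) f\<^sub>i\<close>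
because \<open>e\<^sub>i\<close> is an idempotent commuting with \<open>g\<^sub>i\<close>; far apart \<open>f\<^sub>i\<close> and \<open>f\<^sub>j\<close> commute; and for
\<open>|i - j| = 1\<close> the tie relations move all ties to the left, so that both sides of the braid
relation \<open>f\<^sub>i f\<^sub>j f\<^sub>i = f\<^sub>j f\<^sub>i f\<^sub>j\<close> become \<open>e\<^sub>i e\<^sub>j g\<^sub>i g\<^sub>j g\<^sub>i\<close> and \<open>e\<^sub>j e\<^sub>i g\<^sub>j g\<^sub>i g\<^sub>j\<close>,
which agree by the braid relation of the \<open>g\<^sub>i\<close>.\<close>

instantiation list :: (type) monoid_add
begin
definition zero_list :: "'a list" where "zero_list = []"
definition plus_list :: "'a list \<Rightarrow> 'a list \<Rightarrow> 'a list" where "plus_list u v = u @ v"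
instance by standard (auto simp: zero_list_def plus_list_def)
end

text \<open>With the free monoid as exponent monoid, the ring structure of \<^typ>\<open>'g freealg\<close> provided by
\<^theory>\<open>HOL-Library.Poly_Mapping\<close> is the free algebra, and \<^const>\<open>fa_mul\<close> is its product.\<close>

definition fa_word :: "'g list \<Rightarrow> 'g freealg" where
  "fa_word w = Poly_Mapping.single w 1"

lemma poly_mapping_sum_single_lookup:
  "(\<Sum>k\<in>Poly_Mapping.keys p. Poly_Mapping.single k (Poly_Mapping.lookup p k)) = p"
  by (rule poly_mapping_eqI) (auto simp: lookup_sum lookup_single when_def in_keys_iff)

lemma fa_mul_eq_times: "fa_mul p r = p * r"
proof -
  have "p * r = (\<Sum>u\<in>Poly_Mapping.keys p. Poly_Mapping.single u (Poly_Mapping.lookup p u)) *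
      (\<Sum>v\<in>Poly_Mapping.keys r. Poly_Mapping.single v (Poly_Mapping.lookup r v))"
    by (simp only: poly_mapping_sum_single_lookup)
  also have "\<dots> = fa_mul p r"
    by (simp add: fa_mul_def sum_distrib_left sum_distrib_right mult_single plus_list_def)
       (rule sum.swap)
  finally show ?thesis by simp
qed

lemma fa_one_eq_1: "fa_one = 1"
  using single_one[where 'a = "'g list" and 'b = laurent]
  by (simp add: fa_one_def fa_scal_def zero_list_def)

lemma fa_smult_eq: "fa_smult c p = Poly_Mapping.single [] c * p"
  by (simp add: fa_smult_def fa_scal_def fa_mul_eq_times)

lemma fa_gen_eq_fa_word: "fa_gen x = fa_word [x]"
  by (simp add: fa_gen_def fa_word_def)

lemma single_mult_fa_word [simp]:
  "Poly_Mapping.single u c * fa_word v = Poly_Mapping.single (u @ v) c"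
  by (simp add: fa_word_def mult_single plus_list_def)

lemma fa_word_mult [simp]: "fa_word u * fa_word v = fa_word (u @ v)"
  by (simp add: fa_word_def mult_single plus_list_def)

lemma fa_word_mult_single [simp]:
  "fa_word u * Poly_Mapping.single v c = Poly_Mapping.single (u @ v) c"
  by (simp add: fa_word_def mult_single plus_list_def)

lemma fa_word_eq_iff [simp]: "fa_word u = fa_word v \<longleftrightarrow> u = v"
  by (metis fa_word_def lookup_single_eq lookup_single_not_eq zero_neq_one)

lemma fa_word_neq_zero [simp]: "fa_word u \<noteq> 0"
  by (metis fa_word_def lookup_single_eq lookup_zero zero_neq_one)

lemmas fa_ops_eq = fa_mul_eq_times fa_one_eq_1 fa_smult_eq fa_gen_eq_fa_word

lemma fa_cong_mult_context: "fa_cong R a b \<Longrightarrow> fa_cong R (x * a * y) (x * b * y)"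
  using fa_cong.mult_left[of R "a * y" "b * y" x] fa_cong.mult_right[of R a b y]
  by (simp add: fa_mul_eq_times mult.assoc)

lemmas [trans] = fa_cong.trans


section \<open>Substituting words for generators\<close>

definition fa_subst :: "('a \<Rightarrow> 'b list) \<Rightarrow> 'a freealg \<Rightarrow> 'b freealg" where
  "fa_subst \<phi> p = (\<Sum>w\<in>Poly_Mapping.keys p.
      Poly_Mapping.single (concat (map \<phi> w)) (Poly_Mapping.lookup p w))"

lemma fa_subst_eq_sum_superset:
  assumes "finite S" "Poly_Mapping.keys p \<subseteq> S"
  shows "fa_subst \<phi> p = (\<Sum>w\<in>S. Poly_Mapping.single (concat (map \<phi> w)) (Poly_Mapping.lookup p w))"
  unfolding fa_subst_def by (rule sum.mono_neutral_left) (auto simp: assms in_keys_iff)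

lemma fa_subst_add: "fa_subst \<phi> (x + y) = fa_subst \<phi> x + fa_subst \<phi> y"
proof -
  let ?S = "Poly_Mapping.keys x \<union> Poly_Mapping.keys y"
  let ?s = "\<lambda>p. \<Sum>w\<in>?S. Poly_Mapping.single (concat (map \<phi> w)) (Poly_Mapping.lookup p w)"
  have "fa_subst \<phi> (x + y) = ?s (x + y)"
    by (rule fa_subst_eq_sum_superset) (auto simp: in_keys_iff lookup_add)
  also have "\<dots> = ?s x + ?s y"
    by (simp add: lookup_add single_add sum.distrib)
  also have "\<dots> = fa_subst \<phi> x + fa_subst \<phi> y"
    using fa_subst_eq_sum_superset[of ?S x \<phi>] fa_subst_eq_sum_superset[of ?S y \<phi>] by simp
  finally show ?thesis .
qed

lemma fa_subst_zero [simp]: "fa_subst \<phi> 0 = 0"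
  by (simp add: fa_subst_def)

lemma fa_subst_sum: "fa_subst \<phi> (sum f S) = (\<Sum>s\<in>S. fa_subst \<phi> (f s))"
  by (induction S rule: infinite_finite_induct) (auto simp: fa_subst_add)

lemma fa_subst_single [simp]:
  "fa_subst \<phi> (Poly_Mapping.single w c) = Poly_Mapping.single (concat (map \<phi> w)) c"
  by (cases "c = 0") (auto simp: fa_subst_def)

lemma fa_subst_word [simp]: "fa_subst \<phi> (fa_word w) = fa_word (concat (map \<phi> w))"
  by (simp add: fa_word_def)

lemma fa_subst_mult: "fa_subst \<phi> (x * y) = fa_subst \<phi> x * fa_subst \<phi> y"
proof -
  have "fa_subst \<phi> (x * y) = (\<Sum>u\<in>Poly_Mapping.keys x. \<Sum>v\<in>Poly_Mapping.keys y.
      Poly_Mapping.single (concat (map \<phi> u) @ concat (map \<phi> v))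
        (Poly_Mapping.lookup x u * Poly_Mapping.lookup y v))"
    by (simp add: fa_mul_eq_times[symmetric] fa_mul_def fa_subst_sum)
  also have "\<dots> = fa_subst \<phi> x * fa_subst \<phi> y"
    by (simp add: fa_subst_def sum_distrib_left sum_distrib_right mult_single plus_list_def)
       (rule sum.swap)
  finally show ?thesis .
qed

lemma fa_subst_one: "fa_subst \<phi> 1 = 1"
  using fa_subst_single[of \<phi> "[]" 1] by (simp add: fa_one_eq_1[symmetric] fa_one_def fa_scal_def)

lemma fa_subst_smult: "fa_subst \<phi> (fa_smult c x) = fa_smult c (fa_subst \<phi> x)"
  by (simp add: fa_smult_eq fa_subst_mult)

lemma fa_subst_cong:
  assumes rels: "\<And>a b. (a, b) \<in> R \<Longrightarrow> fa_cong S (fa_subst \<phi> a) (fa_subst \<phi> b)"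
  shows "fa_cong R x y \<Longrightarrow> fa_cong S (fa_subst \<phi> x) (fa_subst \<phi> y)"
proof (induction rule: fa_cong.induct)
  case (rel a b)
  then show ?case by (rule rels)
next
  case (refl a)
  then show ?case by (rule fa_cong.refl)
next
  case (sym a b)
  from sym.IH show ?case by (rule fa_cong.sym)
next
  case (trans a b c)
  from trans.IH show ?case by (rule fa_cong.trans)
next
  case (add a b c d)
  then show ?case by (simp add: fa_subst_add fa_cong.add)
next
  case (mult_left a b c)
  then show ?case
    using fa_cong.mult_left[of S _ _ "fa_subst \<phi> c"] by (simp add: fa_mul_eq_times fa_subst_mult)
next
  case (mult_right a b c)
  then show ?case
    using fa_cong.mult_right[of S _ _ "fa_subst \<phi> c"] by (simp add: fa_mul_eq_times fa_subst_mult)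
qed

lemma pres_alg_hom_fa_subst:
  assumes "\<And>a b. (a, b) \<in> R \<Longrightarrow> fa_cong S (fa_subst \<phi> a) (fa_subst \<phi> b)"
  shows "pres_alg_hom (fa_cong R) (fa_cong S) (fa_subst \<phi>)"
  unfolding pres_alg_hom_def
  by (auto simp: fa_subst_cong[OF assms] fa_subst_add fa_subst_smult fa_mul_eq_times fa_subst_mult
      fa_one_eq_1 fa_subst_one intro: fa_cong.refl)


section \<open>Word relations in the algebra of braids and ties\<close>

abbreviation E_word_eq :: "nat \<Rightarrow> egen list \<Rightarrow> egen list \<Rightarrow> bool" where
  "E_word_eq n u v \<equiv> E_eq n (fa_word u) (fa_word v)"

abbreviation adjacent :: "nat \<Rightarrow> nat \<Rightarrow> bool" where
  "adjacent i j \<equiv> i = j + 1 \<or> j = i + 1"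

abbreviation distant :: "nat \<Rightarrow> nat \<Rightarrow> bool" where
  "distant i j \<equiv> i > j + 1 \<or> j > i + 1"

lemma E_word_eq_in_context:
  "E_word_eq n l r \<Longrightarrow> u = x @ l @ y \<Longrightarrow> v = x @ r @ y \<Longrightarrow> E_word_eq n u v"
  using fa_cong_mult_context[of "E_rels n" "fa_word l" "fa_word r" "fa_word x" "fa_word y"] by simp

lemma E_e_idem: "i \<in> {1..<n} \<Longrightarrow> E_word_eq n [eE i, eE i] [eE i]"
  by (rule fa_cong.rel) (simp add: E_rels_def fa_ops_eq)

lemma E_e_comm: "i \<in> {1..<n} \<Longrightarrow> j \<in> {1..<n} \<Longrightarrow> E_word_eq n [eE i, eE j] [eE j, eE i]"
  by (rule fa_cong.rel) (simp add: E_rels_def fa_ops_eq)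

lemma E_g_braid:
  "i \<in> {1..<n} \<Longrightarrow> j \<in> {1..<n} \<Longrightarrow> adjacent i j \<Longrightarrow>
    E_word_eq n [eG i, eG j, eG i] [eG j, eG i, eG j]"
  by (rule fa_cong.rel) (simp add: E_rels_def fa_ops_eq)

lemma E_g_far_comm:
  "i \<in> {1..<n} \<Longrightarrow> j \<in> {1..<n} \<Longrightarrow> distant i j \<Longrightarrow> E_word_eq n [eG i, eG j] [eG j, eG i]"
  by (rule fa_cong.rel) (simp add: E_rels_def fa_ops_eq)

lemma E_g_e_comm: "i \<in> {1..<n} \<Longrightarrow> E_word_eq n [eG i, eE i] [eE i, eG i]"
  by (rule fa_cong.rel) (simp add: E_rels_def fa_ops_eq)

lemma E_g_e_far_comm:
  "i \<in> {1..<n} \<Longrightarrow> j \<in> {1..<n} \<Longrightarrow> distant i j \<Longrightarrow> E_word_eq n [eG i, eE j] [eE j, eG i]"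
  by (rule fa_cong.rel) (simp add: E_rels_def fa_ops_eq)

lemma E_e_g_g:
  "i \<in> {1..<n} \<Longrightarrow> j \<in> {1..<n} \<Longrightarrow> adjacent i j \<Longrightarrow>
    E_word_eq n [eE i, eG j, eG i] [eG j, eG i, eE j]"
  by (rule fa_cong.rel) (simp add: E_rels_def fa_ops_eq)

lemma E_e_e_g:
  "i \<in> {1..<n} \<Longrightarrow> j \<in> {1..<n} \<Longrightarrow> adjacent i j \<Longrightarrow>
    E_word_eq n [eE i, eE j, eG j] [eE i, eG j, eE i]"
  by (rule fa_cong.rel) (simp add: E_rels_def fa_ops_eq)

lemma E_e_g_e:
  "i \<in> {1..<n} \<Longrightarrow> j \<in> {1..<n} \<Longrightarrow> adjacent i j \<Longrightarrow>
    E_word_eq n [eE i, eG j, eE i] [eG j, eE i, eE j]"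
  by (rule fa_cong.rel) (simp add: E_rels_def fa_ops_eq)

lemma E_g_quadratic:
  "i \<in> {1..<n} \<Longrightarrow>
    E_eq n (fa_word [eG i, eG i]) (1 + Poly_Mapping.single [eE i, eG i] (qL - qinvL))"
  by (rule fa_cong.rel) (simp add: E_rels_def fa_ops_eq)

lemma E_e_out_of_range: "i \<notin> {1..<n} \<Longrightarrow> E_eq n (fa_word [eE i]) 0"
  by (rule fa_cong.rel) (simp add: E_rels_def fa_ops_eq)


lemma E_g_e_e:
  assumes "i \<in> {1..<n}" "j \<in> {1..<n}" "adjacent i j"
  shows "E_word_eq n [eG j, eE i, eE j] [eE i, eE j, eG j]"
proof -
  have "E_word_eq n [eG j, eE i, eE j] [eE i, eG j, eE i]"
    using E_e_g_e[OF assms] by (rule fa_cong.sym)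
  also have "E_eq n \<dots> (fa_word [eE i, eE j, eG j])"
    using E_e_e_g[OF assms] by (rule fa_cong.sym)
  finally show ?thesis .
qed

lemma E_e_absorbs_tied: "i \<in> {1..<n} \<Longrightarrow> E_word_eq n [eE i, eE i, eG i] [eE i, eG i]"
  by (rule E_word_eq_in_context[OF E_e_idem, where x = "[]" and y = "[eG i]"]) simp_all

lemma E_e_tied_comm:
  assumes i: "i \<in> {1..<n}" and j: "j \<in> {1..<n}"
  shows "E_word_eq n [eE i, eE j, eG j] [eE j, eG j, eE i]"
proof -
  consider "i = j" | "adjacent i j" | "distant i j" by linarith
  then show ?thesis
  proof cases
    case 1
    show ?thesis unfolding 1
      by (rule E_word_eq_in_context[OF E_g_e_comm[OF j, THEN fa_cong.sym],
            where x = "[eE j]" and y = "[]"]) simp_all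
  next
    case 2
    have "E_word_eq n [eE j, eG j, eE i] [eG j, eE j, eE i]"
      by (rule E_word_eq_in_context[OF E_g_e_comm[OF j, THEN fa_cong.sym],
            where x = "[]" and y = "[eE i]"]) simp_all
    also have "E_eq n \<dots> (fa_word [eG j, eE i, eE j])"
      by (rule E_word_eq_in_context[OF E_e_comm[OF j i], where x = "[eG j]" and y = "[]"]) simp_all
    also have "E_eq n \<dots> (fa_word [eE i, eE j, eG j])"
      using i j 2 by (rule E_g_e_e)
    finally show ?thesis by (rule fa_cong.sym)
  next
    case 3
    have "E_word_eq n [eE j, eG j, eE i] [eE j, eE i, eG j]"
      by (rule E_word_eq_in_context[OF E_g_e_far_comm[OF j i], where x = "[eE j]" and y = "[]"])
        (use 3 in auto)
    also have "E_eq n \<dots> (fa_word [eE i, eE j, eG j])"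
      by (rule E_word_eq_in_context[OF E_e_comm[OF j i], where x = "[]" and y = "[eG j]"]) simp_all
    finally show ?thesis by (rule fa_cong.sym)
  qed
qed

lemma E_tied_far_comm:
  assumes i: "i \<in> {1..<n}" and j: "j \<in> {1..<n}" and far: "distant i j"
  shows "E_word_eq n [eE i, eG i, eE j, eG j] [eE j, eG j, eE i, eG i]"
proof -
  have far': "distant j i" using far by auto
  have "E_word_eq n [eE i, eG i, eE j, eG j] [eE i, eE j, eG i, eG j]"
    by (rule E_word_eq_in_context[OF E_g_e_far_comm[OF i j far], where x = "[eE i]" and y = "[eG j]"])
      simp_all
  also have "E_eq n \<dots> (fa_word [eE j, eE i, eG i, eG j])"
    by (rule E_word_eq_in_context[OF E_e_comm[OF i j], where x = "[]" and y = "[eG i, eG j]"]) simp_all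
  also have "E_eq n \<dots> (fa_word [eE j, eE i, eG j, eG i])"
    by (rule E_word_eq_in_context[OF E_g_far_comm[OF i j far], where x = "[eE j, eE i]" and y = "[]"])
      simp_all
  also have "E_eq n \<dots> (fa_word [eE j, eG j, eE i, eG i])"
    by (rule E_word_eq_in_context[OF E_g_e_far_comm[OF j i far', THEN fa_cong.sym],
          where x = "[eE j]" and y = "[eG i]"]) simp_all
  finally show ?thesis .
qed

lemma E_tied_braid_ties_left:
  assumes i: "i \<in> {1..<n}" and j: "j \<in> {1..<n}" and adj: "adjacent i j"
  shows "E_word_eq n [eE i, eG i, eE j, eG j, eE i, eG i] [eE i, eE j, eG i, eG j, eG i]"
proof -
  have adj': "adjacent j i" using adj by auto
  have "E_word_eq n [eE i, eG i, eE j, eG j, eE i, eG i] [eG i, eE i, eE j, eG j, eE i, eG i]"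
    by (rule E_word_eq_in_context[OF E_g_e_comm[OF i, THEN fa_cong.sym],
          where x = "[]" and y = "[eE j, eG j, eE i, eG i]"]) simp_all
  also have "E_eq n \<dots> (fa_word [eG i, eE j, eE i, eG j, eE i, eG i])"
    by (rule E_word_eq_in_context[OF E_e_comm[OF i j],
          where x = "[eG i]" and y = "[eG j, eE i, eG i]"]) simp_all
  also have "E_eq n \<dots> (fa_word [eE j, eE i, eG i, eG j, eE i, eG i])"
    by (rule E_word_eq_in_context[OF E_g_e_e[OF j i adj'],
          where x = "[]" and y = "[eG j, eE i, eG i]"]) simp_all
  also have "E_eq n \<dots> (fa_word [eE j, eE i, eE j, eG i, eG j, eG i])"
    by (rule E_word_eq_in_context[OF E_e_g_g[OF j i adj', THEN fa_cong.sym],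
          where x = "[eE j, eE i]" and y = "[eG i]"]) simp_all
  also have "E_eq n \<dots> (fa_word [eE j, eE j, eE i, eG i, eG j, eG i])"
    by (rule E_word_eq_in_context[OF E_e_comm[OF i j],
          where x = "[eE j]" and y = "[eG i, eG j, eG i]"]) simp_all
  also have "E_eq n \<dots> (fa_word [eE j, eE i, eG i, eG j, eG i])"
    by (rule E_word_eq_in_context[OF E_e_idem[OF j],
          where x = "[]" and y = "[eE i, eG i, eG j, eG i]"]) simp_all
  also have "E_eq n \<dots> (fa_word [eE i, eE j, eG i, eG j, eG i])"
    by (rule E_word_eq_in_context[OF E_e_comm[OF j i],
          where x = "[]" and y = "[eG i, eG j, eG i]"]) simp_all
  finally show ?thesis .
qed

lemma E_tied_braid:
  assumes i: "i \<in> {1..<n}" and j: "j \<in> {1..<n}" and adj: "adjacent i j"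
  shows "E_word_eq n [eE i, eG i, eE j, eG j, eE i, eG i] [eE j, eG j, eE i, eG i, eE j, eG j]"
proof -
  have adj': "adjacent j i" using adj by auto
  have "E_word_eq n [eE i, eG i, eE j, eG j, eE i, eG i] [eE i, eE j, eG i, eG j, eG i]"
    using i j adj by (rule E_tied_braid_ties_left)
  also have "E_eq n \<dots> (fa_word [eE i, eE j, eG j, eG i, eG j])"
    by (rule E_word_eq_in_context[OF E_g_braid[OF i j adj], where x = "[eE i, eE j]" and y = "[]"])
      simp_all
  also have "E_eq n \<dots> (fa_word [eE j, eE i, eG j, eG i, eG j])"
    by (rule E_word_eq_in_context[OF E_e_comm[OF i j], where x = "[]" and y = "[eG j, eG i, eG j]"])
      simp_all
  also have "E_eq n \<dots> (fa_word [eE j, eG j, eE i, eG i, eE j, eG j])"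
    using E_tied_braid_ties_left[OF j i adj'] by (rule fa_cong.sym)
  finally show ?thesis .
qed

lemma E_tied_quadratic:
  assumes i: "i \<in> {1..<n}"
  shows "E_eq n (fa_word [eE i, eG i, eE i, eG i])
    (fa_word [eE i] + Poly_Mapping.single [eE i, eG i] (qL - qinvL))"
proof -
  let ?c = "Poly_Mapping.single [] (qL - qinvL)"
  have "E_word_eq n [eE i, eG i, eE i, eG i] [eE i, eE i, eG i, eG i]"
    by (rule E_word_eq_in_context[OF E_g_e_comm[OF i], where x = "[eE i]" and y = "[eG i]"]) simp_all
  also have "E_eq n \<dots> (fa_word [eE i, eG i, eG i])"
    by (rule E_word_eq_in_context[OF E_e_idem[OF i], where x = "[]" and y = "[eG i, eG i]"]) simp_all
  also have "\<dots> = fa_word [eE i] * fa_word [eG i, eG i] * 1"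
    by simp
  also have "E_eq n \<dots> (fa_word [eE i] * (1 + Poly_Mapping.single [eE i, eG i] (qL - qinvL)) * 1)"
    using E_g_quadratic[OF i] by (rule fa_cong_mult_context)
  also have "\<dots> = fa_word [eE i] + ?c * fa_word [eE i, eE i, eG i]"
    by (simp add: distrib_left)
  also have "E_eq n \<dots> (fa_word [eE i] + ?c * fa_word [eE i, eG i])"
    using fa_cong_mult_context[OF E_e_absorbs_tied[OF i], of ?c 1]
    by (intro fa_cong.add fa_cong.refl) simp
  also have "\<dots> = fa_word [eE i] + Poly_Mapping.single [eE i, eG i] (qL - qinvL)"
    by simp
  finally show ?thesis .
qed

lemma E_tied_out_of_range: "i \<notin> {1..<n} \<Longrightarrow> E_eq n (fa_word [eE i, eG i]) 0"
  using fa_cong_mult_context[OF E_e_out_of_range, of i n 1 "fa_word [eG i]"] by simp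


fun tied_subst :: "bgen \<Rightarrow> egen list" where
  "tied_subst (bE i) = [eE i]"
| "tied_subst (bZ i) = [eE i, eG i]"

lemma bH_rels_tied_subst:
  "(a, b) \<in> bH_rels n \<Longrightarrow> E_eq n (fa_subst tied_subst a) (fa_subst tied_subst b)"
  unfolding bH_rels_def Let_def
  by (auto simp: fa_ops_eq fa_subst_add fa_subst_mult
      intro!: E_e_idem E_e_comm E_tied_braid E_tied_far_comm E_e_absorbs_tied E_e_tied_comm
        E_tied_quadratic E_e_out_of_range E_tied_out_of_range)

theorem proposition5p1:
  fixes n :: nat
  shows "\<exists>\<iota>. pres_alg_hom (bH_eq n) (E_eq n) \<iota> \<and>
           (\<forall>i\<in>{1..<n}.
              E_eq n (\<iota> (fa_gen (bE i))) (fa_gen (eE i)) \<and>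
              E_eq n (\<iota> (fa_gen (bZ i))) (fa_mul (fa_gen (eE i)) (fa_gen (eG i))))"
proof (intro exI conjI ballI)
  show "pres_alg_hom (bH_eq n) (E_eq n) (fa_subst tied_subst)"
    by (rule pres_alg_hom_fa_subst) (rule bH_rels_tied_subst)
  fix i
  show "E_eq n (fa_subst tied_subst (fa_gen (bE i))) (fa_gen (eE i))"
    by (simp add: fa_ops_eq fa_cong.refl)
  show "E_eq n (fa_subst tied_subst (fa_gen (bZ i))) (fa_mul (fa_gen (eE i)) (fa_gen (eG i)))"
    by (simp add: fa_ops_eq fa_cong.refl)
qed

end
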